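(* Let $d\ge1$, $u\in\mathbb{C}\setminus\{0\}$, let $z,x_1,\ldots,x_{d-1}\in\mathbb{C}$ be the parameters of the Markov trace $\mathrm{tr}$, and $x_0=1$. For all $0\le m\le d-1$, $$\mathrm{tr}\big(e_1^{(m)}e_2\,g_{1,2}\big)=(u+1)z^2x_m+(u+2)z\,E^{(m)}+\mathrm{tr}\big(e_1^{(m)}e_2\big).$$
   Context: The Yokonuma–Hecke algebra $\mathrm{Y}_{d,n}(u)$ is the unital associative $\mathbb{C}$-algebra with generators $g_1,\ldots,g_{n-1},t_1,\ldots,t_n$ and relations: $g_ig_j=g_jg_i$ for $|i-j|>1$; $g_{i+1}g_ig_{i+1}=g_ig_{i+1}g_i$; $t_it_j=t_jt_i$; $t_i^d=1$; $g_it_i=t_{i+1}g_i$; $g_it_{i+1}=t_ig_i$; $g_it_j=t_jg_i$ for $j\ne i,i+1$; $g_i^2=1+(u-1)e_i+(u-1)e_ig_i$, where $e_i=\frac1d\sum_{s=0}^{d-1}t_i^st_{i+1}^{d-s}$; $\mathrm{Y}_{d,n}(u)\subset\mathrm{Y}_{d,n+1}(u)$ naturally. Also $e_i^{(m)}=\frac1d\sum_{s=0}^{d-1}t_i^{m+s}t_{i+1}^{d-s}$. For $w\in S_n$ with reduced expression $s_{i_1}\cdots s_{i_k}$ put $g_w=g_{i_1}\cdots g_{i_k}$, and $g_{1,2}=\sum_{w\in S_3}g_w\in\mathrm{Y}_{d,3}(u)$. For complex $z,x_1,\ldots,x_{d-1}$, $\mathrm{tr}$ is the unique linear map on $\bigcup_n\mathrm{Y}_{d,n}(u)$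 with $\mathrm{tr}(ab)=\mathrm{tr}(ba)$, $\mathrm{tr}(1)=1$, $\mathrm{tr}(ag_n)=z\,\mathrm{tr}(a)$, $\mathrm{tr}(at_{n+1}^s)=x_s\,\mathrm{tr}(a)$ for $a,b\in\mathrm{Y}_{d,n}(u)$. Indices of $x$ are taken mod $d$ and $E^{(m)}=\frac1d\sum_{s=0}^{d-1}x_{m+s}x_{d-s}$. *)

theory Defs
  imports Main "HOL.Complex"
begin

(* The Yokonuma--Hecke tower is modelled abstractly: an arbitrary ring 'a,
   a central ring embedding emb : complex => 'a (so 'a is a C-algebra with
   scalar multiplication c . a = emb c * a), and elements g i (i >= 1),
   t i (i >= 1) satisfying the defining relations of Y_{d,n}(u) for all n. *)

definition ee :: "nat \<Rightarrow> (complex \<Rightarrow> 'a::ring_1) \<Rightarrow> (nat \<Rightarrow> 'a) \<Rightarrow> nat \<Rightarrow> nat \<Rightarrow> 'a" where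
  "ee d emb t m i = emb (1 / of_nat d) * (\<Sum>s<d. t i ^ (m + s) * t (Suc i) ^ (d - s))"

abbreviation e0 :: "nat \<Rightarrow> (complex \<Rightarrow> 'a::ring_1) \<Rightarrow> (nat \<Rightarrow> 'a) \<Rightarrow> nat \<Rightarrow> 'a" where
  "e0 d emb t i \<equiv> ee d emb t 0 i"

(* g_{1,2} = sum of g_w over w in S_3, with reduced words
   1, s1, s2, s1 s2, s2 s1, s1 s2 s1 *)
definition g12 :: "(nat \<Rightarrow> 'a::ring_1) \<Rightarrow> 'a" where
  "g12 g = 1 + g 1 + g 2 + g 1 * g 2 + g 2 * g 1 + g 1 * g 2 * g 1"

inductive_set Yalg :: "(complex \<Rightarrow> 'a::ring_1) \<Rightarrow> (nat \<Rightarrow> 'a) \<Rightarrow> (nat \<Rightarrow> 'a) \<Rightarrow> nat \<Rightarrow> 'a set"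
  for emb g t n where
  scal: "emb c \<in> Yalg emb g t n"
| gen_g: "1 \<le> i \<Longrightarrow> i < n \<Longrightarrow> g i \<in> Yalg emb g t n"
| gen_t: "1 \<le> i \<Longrightarrow> i \<le> n \<Longrightarrow> t i \<in> Yalg emb g t n"
| add: "a \<in> Yalg emb g t n \<Longrightarrow> b \<in> Yalg emb g t n \<Longrightarrow> a + b \<in> Yalg emb g t n"
| mult: "a \<in> Yalg emb g t n \<Longrightarrow> b \<in> Yalg emb g t n \<Longrightarrow> a * b \<in> Yalg emb g t n"

definition YH_rels :: "nat \<Rightarrow> complex \<Rightarrow> (complex \<Rightarrow> 'a::ring_1) \<Rightarrow> (nat \<Rightarrow> 'a) \<Rightarrow> (nat \<Rightarrow> 'a) \<Rightarrow> bool" where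
  "YH_rels d u emb g t \<longleftrightarrow>
     emb 1 = 1 \<and>
     (\<forall>a b. emb (a + b) = emb a + emb b) \<and>
     (\<forall>a b. emb (a * b) = emb a * emb b) \<and>
     (\<forall>c y. emb c * y = y * emb c) \<and>
     (\<forall>i j. 1 \<le> i \<longrightarrow> 1 \<le> j \<longrightarrow> (i + 1 < j \<or> j + 1 < i) \<longrightarrow> g i * g j = g j * g i) \<and>
     (\<forall>i. 1 \<le> i \<longrightarrow> g (i+1) * g i * g (i+1) = g i * g (i+1) * g i) \<and>
     (\<forall>i j. 1 \<le> i \<longrightarrow> 1 \<le> j \<longrightarrow> t i * t j = t j * t i) \<and>
     (\<forall>i. 1 \<le> i \<longrightarrow> t i ^ d = 1) \<and>
     (\<forall>i. 1 \<le> i \<longrightarrow> g i * t i = t (i+1) * g i) \<and>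
     (\<forall>i. 1 \<le> i \<longrightarrow> g i * t (i+1) = t i * g i) \<and>
     (\<forall>i j. 1 \<le> i \<longrightarrow> 1 \<le> j \<longrightarrow> j \<noteq> i \<longrightarrow> j \<noteq> i + 1 \<longrightarrow> g i * t j = t j * g i) \<and>
     (\<forall>i. 1 \<le> i \<longrightarrow> g i ^ 2 = 1 + emb (u - 1) * e0 d emb t i + emb (u - 1) * e0 d emb t i * g i)"

definition markov_trace :: "nat \<Rightarrow> (complex \<Rightarrow> 'a::ring_1) \<Rightarrow> (nat \<Rightarrow> 'a) \<Rightarrow> (nat \<Rightarrow> 'a)
     \<Rightarrow> complex \<Rightarrow> (nat \<Rightarrow> complex) \<Rightarrow> ('a \<Rightarrow> complex) \<Rightarrow> bool" where
  "markov_trace d emb g t z x tr \<longleftrightarrow>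
     (\<forall>n a b. a \<in> Yalg emb g t n \<longrightarrow> b \<in> Yalg emb g t n \<longrightarrow> tr (a + b) = tr a + tr b) \<and>
     (\<forall>n c a. a \<in> Yalg emb g t n \<longrightarrow> tr (emb c * a) = c * tr a) \<and>
     (\<forall>n a b. a \<in> Yalg emb g t n \<longrightarrow> b \<in> Yalg emb g t n \<longrightarrow> tr (a * b) = tr (b * a)) \<and>
     tr 1 = 1 \<and>
     (\<forall>n a. 1 \<le> n \<longrightarrow> a \<in> Yalg emb g t n \<longrightarrow> tr (a * g n) = z * tr a) \<and>
     (\<forall>n a s. 1 \<le> s \<longrightarrow> s \<le> d - 1 \<longrightarrow> a \<in> Yalg emb g t n \<longrightarrow> tr (a * t (n+1) ^ s) = x s * tr a)"

definition xm :: "nat \<Rightarrow> (nat \<Rightarrow> complex) \<Rightarrow> nat \<Rightarrow> complex" where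
  "xm d x k = x (k mod d)"

definition EE :: "nat \<Rightarrow> (nat \<Rightarrow> complex) \<Rightarrow> nat \<Rightarrow> complex" where
  "EE d x m = (1 / of_nat d) * (\<Sum>s<d. xm d x (m + s) * xm d x (d - s))"

end

theory Submission
  imports Defs
begin

text \<open>Expanding the product, e_1^(m) e_2 is d^-2 times the sum over s, r < d of the monomials
t_1^(m+s) t_2^(d-s+r) t_3^(d-r). For each of the five words g_w other than 1, one moves the t_j
past the g_i, uses cyclicity to bring the top generator to the right and applies the Markov
property; only g_1 g_2 g_1 needs the quadratic relation for g_1^2. Every trace obtained is
either z^2 x_m or z times a product x_(m+j) x_(-j) with j one of r, s, s - r (or s - r + k,
summed over k, from g_1^2). Since j \<mapsto> x_(m+j) x_(-j) is d-periodic, each of its sums over a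
full period equals d E^(m).\<close>

lemma power_mult_intertwine:
  fixes a b y :: "'a::monoid_mult"
  assumes "a * y = y * b"
  shows "a ^ k * y = y * b ^ k"
proof (induction k)
  case (Suc k)
  have "a ^ Suc k * y = a * (a ^ k * y)" by (simp add: mult.assoc)
  also have "\<dots> = (a * y) * b ^ k" by (simp add: Suc mult.assoc)
  also have "\<dots> = y * b ^ Suc k" by (simp add: assms mult.assoc)
  finally show ?case .
qed simp

lemma power_commute_power:
  fixes a b :: "'a::monoid_mult"
  assumes "a * b = b * a"
  shows "a ^ i * b ^ j = b ^ j * a ^ i"
  by (metis assms power_mult_intertwine)

lemma sum_lessThan_periodic_shift:
  fixes f :: "int \<Rightarrow> 'a::cancel_comm_monoid_add"
  assumes periodic: "\<And>j. f (j + int n) = f j"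
  shows "(\<Sum>k<n. f (c + int k)) = (\<Sum>k<n. f (int k))"
proof -
  have step: "(\<Sum>k<n. f (c + 1 + int k)) = (\<Sum>k<n. f (c + int k))" for c
  proof -
    have "f c + (\<Sum>k<n. f (c + 1 + int k)) = (\<Sum>k<Suc n. f (c + int k))"
      unfolding sum.lessThan_Suc_shift by (simp add: ac_simps)
    also have "\<dots> = (\<Sum>k<n. f (c + int k)) + f (c + int n)"
      by simp
    also have "\<dots> = f c + (\<Sum>k<n. f (c + int k))"
      by (simp add: periodic add.commute)
    finally show ?thesis by simp
  qed
  show ?thesis
  proof (induction c rule: int_induct[where k = 0])
    case (step2 i)
    then show ?case using step[of "i - 1"] by simp
  qed (simp_all add: step)
qed

locale yokonuma_markov_trace =
  fixes d :: nat and u z :: complex and x :: "nat \<Rightarrow> complex"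
    and emb :: "complex \<Rightarrow> 'a::ring_1" and g t :: "nat \<Rightarrow> 'a" and tr :: "'a \<Rightarrow> complex"
  assumes d_pos: "d \<ge> 1" and x_0: "x 0 = 1" and rels: "YH_rels d u emb g t"
    and markov: "markov_trace d emb g t z x tr"
begin

text \<open>Keeps the simplifier from turning \<open>t 1\<close>, \<open>g 1\<close> into \<open>t (Suc 0)\<close>, \<open>g (Suc 0)\<close>.\<close>
declare One_nat_def [simp del]

abbreviation Y :: "nat \<Rightarrow> 'a set" where "Y n \<equiv> Yalg emb g t n"

lemma emb_1: "emb 1 = 1"
  and emb_add: "emb (a + b) = emb a + emb b"
  and emb_mult: "emb (a * b) = emb a * emb b"
  and emb_commute: "emb c * y = y * emb c"
  and t_commute: "1 \<le> i \<Longrightarrow> 1 \<le> j \<Longrightarrow> t i * t j = t j * t i"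
  and t_power_d: "1 \<le> i \<Longrightarrow> t i ^ d = 1"
  and g_t_same: "1 \<le> i \<Longrightarrow> g i * t i = t (i + 1) * g i"
  and g_t_far: "1 \<le> i \<Longrightarrow> 1 \<le> j \<Longrightarrow> j \<noteq> i \<Longrightarrow> j \<noteq> i + 1 \<Longrightarrow> g i * t j = t j * g i"
  and g_square: "1 \<le> i \<Longrightarrow>
    g i ^ 2 = 1 + emb (u - 1) * e0 d emb t i + emb (u - 1) * e0 d emb t i * g i"
  using rels unfolding YH_rels_def by blast+

lemma tr_add: "a \<in> Y n \<Longrightarrow> b \<in> Y n \<Longrightarrow> tr (a + b) = tr a + tr b"
  and tr_emb_mult: "a \<in> Y n \<Longrightarrow> tr (emb c * a) = c * tr a"
  and tr_commute: "a \<in> Y n \<Longrightarrow> b \<in> Y n \<Longrightarrow> tr (a * b) = tr (b * a)"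
  and tr_1: "tr 1 = 1"
  and tr_mult_g: "1 \<le> n \<Longrightarrow> a \<in> Y n \<Longrightarrow> tr (a * g n) = z * tr a"
  and tr_mult_t_power_pos:
    "1 \<le> s \<Longrightarrow> s \<le> d - 1 \<Longrightarrow> a \<in> Y n \<Longrightarrow> tr (a * t (n + 1) ^ s) = x s * tr a"
  using markov unfolding markov_trace_def by blast+

lemma emb_0: "emb 0 = 0"
  using emb_add[of 0 0] by simp

lemma emb_mult_left_commute: "y * (emb c * w) = emb c * (y * w)"
  by (metis emb_commute mult.assoc)

lemma Y_1: "1 \<in> Y n"
  using Yalg.scal[of emb 1] by (simp add: emb_1)

lemma Y_power: "a \<in> Y n \<Longrightarrow> a ^ k \<in> Y n"
  by (induction k) (auto intro: Y_1 Yalg.mult)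

lemma Y_sum: "(\<And>i. i \<in> A \<Longrightarrow> f i \<in> Y n) \<Longrightarrow> sum f A \<in> Y n"
  using Yalg.scal[of emb 0]
  by (induction A rule: infinite_finite_induct) (auto simp: emb_0 intro: Yalg.add)

lemma Y_t_power: "1 \<le> i \<Longrightarrow> i \<le> n \<Longrightarrow> t i ^ k \<in> Y n"
  by (intro Y_power Yalg.gen_t)

lemmas Y_intros = Yalg.mult Yalg.add Yalg.scal Yalg.gen_g Y_t_power Y_sum

lemma tr_sum: "(\<And>i. i \<in> A \<Longrightarrow> f i \<in> Y n) \<Longrightarrow> tr (sum f A) = (\<Sum>i\<in>A. tr (f i))"
proof (induction A rule: infinite_finite_induct)
  case (insert a A)
  have "tr (f a + sum f A) = tr (f a) + tr (sum f A)"
    by (rule tr_add) (use insert in \<open>auto intro!: Y_sum\<close>)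
  then show ?case using insert by simp
qed (use tr_emb_mult[OF Y_1, of 0] emb_0 in simp_all)

lemma t_power_mod:
  assumes "1 \<le> i"
  shows "t i ^ k = t i ^ (k mod d)"
proof -
  have "t i ^ k = (t i ^ d) ^ (k div d) * t i ^ (k mod d)"
    by (simp flip: power_mult power_add)
  also have "\<dots> = t i ^ (k mod d)"
    by (simp add: t_power_d[OF assms])
  finally show ?thesis .
qed

lemma tr_mult_t_power: "a \<in> Y n \<Longrightarrow> tr (a * t (n + 1) ^ k) = xm d x k * tr a"
proof -
  assume a: "a \<in> Y n"
  have "k mod d < d" using d_pos by simp
  then show ?thesis
    using t_power_mod[of "n + 1" k] tr_mult_t_power_pos[OF _ _ a, of "k mod d"] x_0
    by (cases "k mod d = 0") (auto simp: xm_def)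
qed

lemma t_powers_commute: "1 \<le> i \<Longrightarrow> 1 \<le> j \<Longrightarrow> t i ^ a * t j ^ b = t j ^ b * t i ^ a"
  by (intro power_commute_power t_commute)

lemma t2_g1: "t 2 ^ k * g 1 = g 1 * t 1 ^ k"
  by (rule power_mult_intertwine) (use g_t_same[of 1] in simp)

lemma t3_g1: "t 3 ^ k * g 1 = g 1 * t 3 ^ k"
  by (rule power_mult_intertwine) (simp add: g_t_far)

lemma t3_g2: "t 3 ^ k * g 2 = g 2 * t 2 ^ k"
  by (rule power_mult_intertwine) (use g_t_same[of 2] in simp)

lemma t2_g1_left: "t 2 ^ k * (g 1 * w) = g 1 * (t 1 ^ k * w)"
  and t3_g1_left: "t 3 ^ k * (g 1 * w) = g 1 * (t 3 ^ k * w)"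
  and t3_g2_left: "t 3 ^ k * (g 2 * w) = g 2 * (t 2 ^ k * w)"
  by (simp_all add: t2_g1 t3_g1 t3_g2 flip: mult.assoc)

lemmas t_g_commute = t2_g1 t3_g1 t3_g2 t2_g1_left t3_g1_left t3_g2_left

lemma t2_power_mult_t1_t2: "t 2 ^ c * (t 1 ^ a * t 2 ^ b) = t 1 ^ a * t 2 ^ (b + c)"
proof -
  have "t 2 ^ c * (t 1 ^ a * t 2 ^ b) = t 1 ^ a * (t 2 ^ c * t 2 ^ b)"
    by (simp add: t_powers_commute[of 2 1] flip: mult.assoc)
  then show ?thesis by (metis add.commute power_add)
qed

lemma tr_t1_power: "tr (t 1 ^ a) = xm d x a"
  using tr_mult_t_power[OF Y_1, of 0 a] by (simp add: tr_1)

lemma tr_t1_t2: "tr (t 1 ^ a * t 2 ^ b) = xm d x a * xm d x b"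
proof -
  have "tr (t 1 ^ a * t 2 ^ b) = xm d x b * tr (t 1 ^ a)"
    using tr_mult_t_power[of "t 1 ^ a" 1 b] by (simp add: Y_t_power)
  then show ?thesis by (simp add: tr_t1_power)
qed

lemma tr_t1_t2_g1: "tr (t 1 ^ a * t 2 ^ b * g 1) = z * xm d x (a + b)"
proof -
  have "tr (t 1 ^ a * t 2 ^ b * g 1) = tr ((t 1 ^ a * g 1) * t 1 ^ b)"
    by (simp add: mult.assoc t2_g1)
  also have "\<dots> = tr (t 1 ^ (b + a) * g 1)"
    by (subst tr_commute[of _ 2]) (auto intro!: Y_intros simp: mult.assoc power_add)
  also have "\<dots> = z * tr (t 1 ^ (b + a))"
    using tr_mult_g[of 1 "t 1 ^ (b + a)"] by (simp add: Y_t_power)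
  finally show ?thesis by (simp add: tr_t1_power add.commute)
qed

lemma tr_monomial_g1: "tr (t 1 ^ a * t 2 ^ b * t 3 ^ c * g 1) = z * xm d x (a + b) * xm d x c"
proof -
  have "tr (t 1 ^ a * t 2 ^ b * t 3 ^ c * g 1) = tr ((t 1 ^ a * t 2 ^ b * g 1) * t 3 ^ c)"
    by (simp add: mult.assoc t3_g1)
  also have "\<dots> = xm d x c * tr (t 1 ^ a * t 2 ^ b * g 1)"
    using tr_mult_t_power[of _ 2 c] by (simp add: Y_intros)
  finally show ?thesis by (simp add: tr_t1_t2_g1)
qed

lemma tr_monomial_g2: "tr (t 1 ^ a * t 2 ^ b * t 3 ^ c * g 2) = z * xm d x a * xm d x (b + c)"
proof -
  have "tr (t 1 ^ a * t 2 ^ b * t 3 ^ c * g 2) = tr ((t 1 ^ a * t 2 ^ b * g 2) * t 2 ^ c)"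
    by (simp add: mult.assoc t3_g2)
  also have "\<dots> = tr (t 2 ^ c * (t 1 ^ a * t 2 ^ b * g 2))"
    by (rule tr_commute[of _ 3]) (auto intro!: Y_intros)
  also have "t 2 ^ c * (t 1 ^ a * t 2 ^ b * g 2) = t 1 ^ a * t 2 ^ (b + c) * g 2"
    by (metis t2_power_mult_t1_t2 mult.assoc)
  also have "tr \<dots> = z * tr (t 1 ^ a * t 2 ^ (b + c))"
    using tr_mult_g[of 2] by (simp add: Y_intros)
  finally show ?thesis by (simp add: tr_t1_t2)
qed

lemma tr_monomial_g1_g2: "tr (t 1 ^ a * t 2 ^ b * t 3 ^ c * (g 1 * g 2)) = z\<^sup>2 * xm d x (a + b + c)"
proof -
  have "tr (t 1 ^ a * t 2 ^ b * t 3 ^ c * (g 1 * g 2)) = tr ((t 1 ^ a * t 2 ^ b * g 1 * g 2) * t 2 ^ c)"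
    by (simp add: mult.assoc t_g_commute)
  also have "\<dots> = tr (t 2 ^ c * (t 1 ^ a * t 2 ^ b * g 1 * g 2))"
    by (rule tr_commute[of _ 3]) (auto intro!: Y_intros)
  also have "t 2 ^ c * (t 1 ^ a * t 2 ^ b * g 1 * g 2) = t 1 ^ a * t 2 ^ (b + c) * g 1 * g 2"
    by (metis t2_power_mult_t1_t2 mult.assoc)
  also have "tr \<dots> = z * tr (t 1 ^ a * t 2 ^ (b + c) * g 1)"
    using tr_mult_g[of 2] by (simp add: Y_intros)
  finally show ?thesis by (simp add: tr_t1_t2_g1 power2_eq_square add.assoc)
qed

lemma tr_monomial_g2_g1: "tr (t 1 ^ a * t 2 ^ b * t 3 ^ c * (g 2 * g 1)) = z\<^sup>2 * xm d x (a + b + c)"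
proof -
  have "tr (t 1 ^ a * t 2 ^ b * t 3 ^ c * (g 2 * g 1)) = tr ((t 1 ^ a * t 2 ^ b * g 2 * g 1) * t 1 ^ c)"
    by (simp add: mult.assoc t_g_commute)
  also have "\<dots> = tr (t 1 ^ c * (t 1 ^ a * t 2 ^ b * g 2 * g 1))"
    by (rule tr_commute[of _ 3]) (auto intro!: Y_intros)
  also have "t 1 ^ c * (t 1 ^ a * t 2 ^ b * g 2 * g 1) = (t 1 ^ (c + a) * t 2 ^ b * g 2) * g 1"
    by (simp add: mult.assoc power_add)
  also have "tr \<dots> = tr (g 1 * (t 1 ^ (c + a) * t 2 ^ b * g 2))"
    by (rule tr_commute[of _ 3]) (auto intro!: Y_intros)
  also have "\<dots> = z * tr (g 1 * (t 1 ^ (c + a) * t 2 ^ b))"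
    using tr_mult_g[of 2 "g 1 * (t 1 ^ (c + a) * t 2 ^ b)"] by (simp add: Y_intros mult.assoc)
  also have "tr (g 1 * (t 1 ^ (c + a) * t 2 ^ b)) = tr (t 1 ^ (c + a) * t 2 ^ b * g 1)"
    by (rule tr_commute[of _ 2]) (auto intro!: Y_intros)
  finally show ?thesis by (simp add: tr_t1_t2_g1 power2_eq_square add.commute add.left_commute)
qed

lemma tr_monomial_g1_g2_g1:
  "tr (t 1 ^ a * t 2 ^ b * t 3 ^ c * (g 1 * g 2 * g 1)) = z * tr (t 1 ^ (a + c) * t 2 ^ b * (g 1 * g 1))"
proof -
  have "tr (t 1 ^ a * t 2 ^ b * t 3 ^ c * (g 1 * g 2 * g 1))
      = tr ((t 1 ^ a * t 2 ^ b * g 1 * g 2 * g 1) * t 1 ^ c)"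
    by (simp add: mult.assoc t_g_commute)
  also have "\<dots> = tr (t 1 ^ c * (t 1 ^ a * t 2 ^ b * g 1 * g 2 * g 1))"
    by (rule tr_commute[of _ 3]) (auto intro!: Y_intros)
  also have "t 1 ^ c * (t 1 ^ a * t 2 ^ b * g 1 * g 2 * g 1) = (t 1 ^ (a + c) * t 2 ^ b * g 1 * g 2) * g 1"
    by (simp add: mult.assoc power_add add.commute[of a c])
  also have "tr \<dots> = tr (g 1 * (t 1 ^ (a + c) * t 2 ^ b * g 1 * g 2))"
    by (rule tr_commute[of _ 3]) (auto intro!: Y_intros)
  also have "\<dots> = z * tr (g 1 * (t 1 ^ (a + c) * t 2 ^ b * g 1))"
    using tr_mult_g[of 2 "g 1 * (t 1 ^ (a + c) * t 2 ^ b * g 1)"] by (simp add: Y_intros mult.assoc)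
  also have "tr (g 1 * (t 1 ^ (a + c) * t 2 ^ b * g 1)) = tr (t 1 ^ (a + c) * t 2 ^ b * g 1 * g 1)"
    by (rule tr_commute[of _ 2]) (auto intro!: Y_intros)
  finally show ?thesis by (simp add: mult.assoc)
qed

lemma ee_1: "ee d emb t m 1 = emb (1 / of_nat d) * (\<Sum>s<d. t 1 ^ (m + s) * t 2 ^ (d - s))"
  by (simp add: ee_def)

lemma ee_2: "ee d emb t m 2 = emb (1 / of_nat d) * (\<Sum>s<d. t 2 ^ (m + s) * t 3 ^ (d - s))"
  by (simp add: ee_def)

lemma monomial_t1_t2_mult: "t 1 ^ p * t 2 ^ q * (t 1 ^ k * t 2 ^ j) = t 1 ^ (p + k) * t 2 ^ (j + q)"
  by (simp add: mult.assoc t2_power_mult_t1_t2 power_add)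

lemma monomial_t2_t3_mult: "t 1 ^ a * t 2 ^ b * (t 2 ^ r * t 3 ^ c) = t 1 ^ a * t 2 ^ (b + r) * t 3 ^ c"
  by (simp add: mult.assoc power_add)

lemma tr_t1_t2_g1_square:
  "tr (t 1 ^ p * t 2 ^ q * (g 1 * g 1)) = xm d x p * xm d x q
     + (u - 1) * (1 / of_nat d * (\<Sum>k<d. xm d x (p + k) * xm d x (d - k + q)))
     + (u - 1) * z * xm d x (p + q)"
proof -
  define P where "P = t 1 ^ p * t 2 ^ q"
  define S where "S = (\<Sum>k<d. t 1 ^ k * t 2 ^ (d - k))"
  define c where "c = (u - 1) * (1 / of_nat d)"
  have "emb c = emb (u - 1) * emb (1 / of_nat d)"
    unfolding c_def by (rule emb_mult)
  then have square: "g 1 * g 1 = 1 + emb c * S + emb c * (S * g 1)"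
    using g_square[of 1] ee_1[of 0] by (simp add: power2_eq_square S_def mult.assoc)
  have PS: "P * S = (\<Sum>k<d. t 1 ^ (p + k) * t 2 ^ (d - k + q))"
    by (simp add: P_def S_def sum_distrib_left monomial_t1_t2_mult)
  have PSg: "P * S * g 1 = (\<Sum>k<d. t 1 ^ (p + k) * t 2 ^ (d - k + q) * g 1)"
    by (simp add: PS sum_distrib_right)
  have Y_P: "P \<in> Y 2" and Y_PS: "P * S \<in> Y 2" and Y_PSg: "P * S * g 1 \<in> Y 2"
    unfolding P_def S_def by (auto intro!: Y_intros)
  have "P * (g 1 * g 1) = P + emb c * (P * S) + emb c * (P * S * g 1)"
    by (simp add: square distrib_left emb_mult_left_commute mult.assoc)
  then have "tr (P * (g 1 * g 1)) = tr P + c * tr (P * S) + c * tr (P * S * g 1)"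
    using Y_P Y_PS Y_PSg by (simp add: tr_add[of _ 2] tr_emb_mult[of _ 2] Y_intros)
  moreover have "tr (P * S) = (\<Sum>k<d. xm d x (p + k) * xm d x (d - k + q))"
    unfolding PS by (subst tr_sum[of _ _ 2]) (auto intro!: Y_intros simp: tr_t1_t2)
  moreover have "tr (P * S * g 1) = of_nat d * (z * xm d x (p + q))"
  proof -
    have "xm d x (p + k + (d - k + q)) = xm d x (p + q)" if "k < d" for k
    proof -
      have "p + k + (d - k + q) = p + q + d" using that by simp
      then show ?thesis unfolding xm_def by (simp only: mod_add_self2)
    qed
    then show ?thesis
      unfolding PSg by (subst tr_sum[of _ _ 2]) (auto intro!: Y_intros simp: tr_t1_t2_g1)
  qed
  ultimately show ?thesis
    using d_pos by (simp add: P_def c_def tr_t1_t2)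
qed

definition xi :: "int \<Rightarrow> complex" where
  "xi j = x (nat (j mod int d))"

definition x_pair :: "nat \<Rightarrow> int \<Rightarrow> complex" where
  "x_pair m j = xi (int m + j) * xi (- j)"

lemma xm_eq_xi:
  assumes "int n = j + k * int d"
  shows "xm d x n = xi j"
proof -
  have "int (n mod d) = j mod int d"
    by (simp add: of_nat_mod assms)
  then have "nat (j mod int d) = n mod d"
    by simp
  then show ?thesis
    by (simp add: xm_def xi_def)
qed

lemma xi_of_nat: "n < d \<Longrightarrow> xi (int n) = x n"
  by (simp add: xi_def)

lemma x_pair_periodic: "x_pair m (j + int d) = x_pair m j"
proof -
  have "xi (i + int d) = xi i" for i
    by (simp add: xi_def)
  from this[of "int m + j"] this[of "- j - int d"] show ?thesis
    by (simp add: x_pair_def add.assoc)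
qed

lemma sum_x_pair_shift: "(\<Sum>k<d. x_pair m (c + int k)) = of_nat d * EE d x m"
proof -
  have "xm d x (m + s) * xm d x (d - s) = x_pair m (int s)" if "s < d" for s
    using xm_eq_xi[of "m + s" "int m + int s" 0] xm_eq_xi[of "d - s" "- int s" 1] that
    by (simp add: x_pair_def)
  then have "of_nat d * EE d x m = (\<Sum>k<d. x_pair m (int k))"
    using d_pos by (simp add: EE_def)
  then show ?thesis
    using sum_lessThan_periodic_shift[of "x_pair m" d c] x_pair_periodic by simp
qed

lemma tr_monomial_g12_minus_1:
  assumes s: "s < d" and r: "r < d" and m: "m < d"
  shows "tr (t 1 ^ (m + s) * t 2 ^ (d - s + r) * t 3 ^ (d - r) * (g12 g - 1))
    = z * (x_pair m (int r) + x_pair m (int s) + x_pair m (int s - int r))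
      + (u + 1) * z\<^sup>2 * x m + (u - 1) * z * EE d x m"
proof -
  define a b c where "a = m + s" and "b = d - s + r" and "c = d - r"
  define M where "M = t 1 ^ a * t 2 ^ b * t 3 ^ c"
  have Y_M: "M \<in> Y 3"
    unfolding M_def by (auto intro!: Y_intros)
  have "M * (g12 g - 1) = M * g 1 + M * g 2 + M * (g 1 * g 2) + M * (g 2 * g 1) + M * (g 1 * g 2 * g 1)"
    by (simp add: g12_def algebra_simps)
  then have "tr (M * (g12 g - 1))
      = tr (M * g 1) + tr (M * g 2) + tr (M * (g 1 * g 2)) + tr (M * (g 2 * g 1)) + tr (M * (g 1 * g 2 * g 1))"
    using Y_M by (simp add: tr_add[of _ 3] Y_intros)
  moreover have "tr (M * g 1) = z * x_pair m (int r)"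
    using xm_eq_xi[of "a + b" "int m + int r" 1] xm_eq_xi[of c "- int r" 1] s r
    by (simp add: M_def tr_monomial_g1 x_pair_def a_def b_def c_def)
  moreover have "tr (M * g 2) = z * x_pair m (int s)"
    using xm_eq_xi[of a "int m + int s" 0] xm_eq_xi[of "b + c" "- int s" 2] s r
    by (simp add: M_def tr_monomial_g2 x_pair_def a_def b_def c_def)
  moreover have abc: "xm d x (a + b + c) = x m"
    using xm_eq_xi[of "a + b + c" "int m" 2] xi_of_nat[OF m] s r
    by (simp add: a_def b_def c_def)
  moreover have "tr (M * (g 1 * g 2 * g 1)) = z * (x_pair m (int s - int r) + (u - 1) * EE d x m + (u - 1) * z * x m)"
  proof -
    have "xm d x (a + c + k) * xm d x (d - k + b) = x_pair m (int s - int r + int k)" if "k < d" for k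
      using xm_eq_xi[of "a + c + k" "int m + (int s - int r + int k)" 1]
        xm_eq_xi[of "d - k + b" "- (int s - int r + int k)" 2] s r that
      by (simp add: x_pair_def a_def b_def c_def)
    then have "(\<Sum>k<d. xm d x (a + c + k) * xm d x (d - k + b)) = of_nat d * EE d x m"
      by (simp add: sum_x_pair_shift)
    moreover have "xm d x (a + c) * xm d x b = x_pair m (int s - int r)"
      using xm_eq_xi[of "a + c" "int m + (int s - int r)" 1] xm_eq_xi[of b "- (int s - int r)" 1] s r
      by (simp add: x_pair_def a_def b_def c_def)
    ultimately show ?thesis
      using abc d_pos
      by (simp add: M_def tr_monomial_g1_g2_g1 tr_t1_t2_g1_square add.commute add.left_commute)
  qed
  moreover have "tr (M * (g 1 * g 2)) = z\<^sup>2 * x m" and "tr (M * (g 2 * g 1)) = z\<^sup>2 * x m"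
    using abc by (simp_all add: M_def tr_monomial_g1_g2 tr_monomial_g2_g1)
  moreover have "t 1 ^ (m + s) * t 2 ^ (d - s + r) * t 3 ^ (d - r) = M"
    by (simp add: M_def a_def b_def c_def)
  ultimately show ?thesis
    by (simp add: algebra_simps power2_eq_square)
qed

lemma sum_x_pair_summands:
  "(\<Sum>s<d. \<Sum>r<d. z * (x_pair m (int r) + x_pair m (int s) + x_pair m (int s - int r)) + K)
    = of_nat d ^ 2 * (3 * z * EE d x m + K)"
proof -
  have row: "(\<Sum>k<d. x_pair m (int k)) = of_nat d * EE d x m"
    using sum_x_pair_shift[of m 0] by simp
  have diagonal: "(\<Sum>s<d. x_pair m (int s - int r)) = of_nat d * EE d x m" for r
    using sum_x_pair_shift[of m "- int r"] by simp
  have "(\<Sum>s<d. \<Sum>r<d. x_pair m (int s - int r)) = (\<Sum>r<d. \<Sum>s<d. x_pair m (int s - int r))"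
    by (rule sum.swap)
  then have "(\<Sum>s<d. \<Sum>r<d. x_pair m (int s - int r)) = of_nat d * (of_nat d * EE d x m)"
    by (simp add: diagonal)
  then show ?thesis
    by (simp add: sum.distrib row algebra_simps power2_eq_square flip: sum_distrib_left)
qed

lemma ee_mult_e0:
  "ee d emb t m 1 * e0 d emb t 2
    = emb (1 / of_nat d ^ 2) * (\<Sum>s<d. \<Sum>r<d. t 1 ^ (m + s) * t 2 ^ (d - s + r) * t 3 ^ (d - r))"
proof -
  define A where "A = (\<Sum>s<d. t 1 ^ (m + s) * t 2 ^ (d - s))"
  define B where "B = (\<Sum>r<d. t 2 ^ r * t 3 ^ (d - r))"
  have "ee d emb t m 1 * e0 d emb t 2 = emb (1 / of_nat d) * (A * (emb (1 / of_nat d) * B))"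
    by (simp add: ee_1 ee_2 A_def B_def mult.assoc)
  also have "\<dots> = emb (1 / of_nat d * (1 / of_nat d)) * (A * B)"
    by (simp only: emb_mult_left_commute[of A] emb_mult mult.assoc)
  also have "A * B = (\<Sum>s<d. \<Sum>r<d. t 1 ^ (m + s) * t 2 ^ (d - s + r) * t 3 ^ (d - r))"
    unfolding A_def B_def sum_product by (simp only: monomial_t2_t3_mult)
  finally show ?thesis
    by (simp add: power2_eq_square)
qed

lemma tr_ee_e0_g12:
  assumes m: "m < d"
  shows "tr (ee d emb t m 1 * e0 d emb t 2 * g12 g)
    = (u + 1) * z\<^sup>2 * x m + (u + 2) * z * EE d x m + tr (ee d emb t m 1 * e0 d emb t 2)"
proof -
  define M where "M s r = t 1 ^ (m + s) * t 2 ^ (d - s + r) * t 3 ^ (d - r)" for s r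
  define X where "X = ee d emb t m 1 * e0 d emb t 2"
  define W where "W = g12 g - 1"
  have X: "X = emb (1 / of_nat d ^ 2) * (\<Sum>s<d. \<Sum>r<d. M s r)"
    unfolding X_def M_def by (rule ee_mult_e0)
  have Y_M: "M s r \<in> Y 3" for s r
    unfolding M_def by (auto intro!: Y_intros)
  have Y_W: "W \<in> Y 3"
    unfolding W_def g12_def by (auto intro!: Y_intros)
  have Y_X: "X \<in> Y 3"
    unfolding X using Y_M by (auto intro!: Y_intros)
  have "X * g12 g = X + X * W"
    by (simp add: W_def algebra_simps)
  then have "tr (X * g12 g) = tr X + tr (X * W)"
    using Y_X Y_W by (simp add: tr_add[of _ 3] Y_intros)
  also have "tr (X * W) = 1 / of_nat d ^ 2 * (\<Sum>s<d. \<Sum>r<d. tr (M s r * W))"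
    using Y_W Y_M by (simp add: X mult.assoc sum_distrib_right tr_emb_mult[of _ 3] tr_sum[of _ _ 3] Y_intros)
  also have "(\<Sum>s<d. \<Sum>r<d. tr (M s r * W)) = (\<Sum>s<d. \<Sum>r<d.
      z * (x_pair m (int r) + x_pair m (int s) + x_pair m (int s - int r))
      + ((u + 1) * z\<^sup>2 * x m + (u - 1) * z * EE d x m))"
  proof (intro sum.cong refl)
    fix s r
    assume "s \<in> {..<d}" and "r \<in> {..<d}"
    then show "tr (M s r * W) = z * (x_pair m (int r) + x_pair m (int s) + x_pair m (int s - int r))
      + ((u + 1) * z\<^sup>2 * x m + (u - 1) * z * EE d x m)"
      using tr_monomial_g12_minus_1[OF _ _ m, of s r] by (simp add: M_def W_def add.assoc)
  qed
  also have "\<dots> = of_nat d ^ 2 * (3 * z * EE d x m + ((u + 1) * z\<^sup>2 * x m + (u - 1) * z * EE d x m))"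
    by (rule sum_x_pair_summands)
  finally show ?thesis
    using d_pos by (simp add: X_def algebra_simps)
qed

end

theorem lemma7:
  fixes d m :: nat and u z :: complex and x :: "nat \<Rightarrow> complex"
    and emb :: "complex \<Rightarrow> 'a::ring_1" and g t :: "nat \<Rightarrow> 'a" and tr :: "'a \<Rightarrow> complex"
  assumes "d \<ge> 1" and "u \<noteq> 0" and "x 0 = 1"
    and "YH_rels d u emb g t"
    and "markov_trace d emb g t z x tr"
    and "m \<le> d - 1"
  shows "tr (ee d emb t m 1 * e0 d emb t 2 * g12 g)
         = (u + 1) * z ^ 2 * x m + (u + 2) * z * EE d x m + tr (ee d emb t m 1 * e0 d emb t 2)"
proof -
  interpret yokonuma_markov_trace d u z x emb g t tr
    using assms by unfold_locales
  have "m < d"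
    using assms by linarith
  then show ?thesis
    by (rule tr_ee_e0_g12)
qed

end
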